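(* The duality gap between ADP and SFP is unbounded: for every $N\in\mathbb{N}$ there exist a directed graph $G=(V,A)$ and vertices $s,t\in V$ such that the minimum number of arc pairs needed to separate $s$ and $t$ in $G$ exceeds the maximum number of pairwise almost disjoint $s$-$t$-paths in $G$ by at least $N$.
   Context: Directed graphs may contain parallel arcs; paths are directed paths without repeated vertices. A set of paths is almost disjoint if every two of its paths have at most one arc in common. The optimization version of ADP asks for the maximum number of pairwise almost disjoint $s$-$t$-paths in $G$. A set $\mathcal{A}$ of unordered pairs of distinct arcs of $G$ separates $s$ and $t$ if every $s$-$t$-path in $G$ contains both arcs of at least one pair in $\mathcal{A}$; the optimization version of SFP asks for the minimum size of such a set. (The LP relaxations of the natural integer programs for these two problems form a primal-dual pair, so the SFP minimum is always at least the ADP maximum; the duality gap is their difference.) *)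

theory Defs
  imports Main "Graph_Theory.Digraph" "Graph_Theory.Arc_Walk"
begin

text \<open>Directed multigraphs are AFP Graph_Theory pre_digraphs (arcs carry their own
identity, so parallel arcs are allowed); s-t-paths are arc lists with no repeated
vertex (pre_digraph.apath).\<close>

definition st_paths :: "('a,'b) pre_digraph \<Rightarrow> 'a \<Rightarrow> 'a \<Rightarrow> 'b list set" where
  "st_paths G s t = {p. pre_digraph.apath G s p t}"

definition almost_disjoint :: "'b list set \<Rightarrow> bool" where
  "almost_disjoint P \<longleftrightarrow> (\<forall>p\<in>P. \<forall>q\<in>P. p \<noteq> q \<longrightarrow> card (set p \<inter> set q) \<le> 1)"

definition adp_max :: "('a,'b) pre_digraph \<Rightarrow> 'a \<Rightarrow> 'a \<Rightarrow> nat" where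
  "adp_max G s t = Max {card P | P. P \<subseteq> st_paths G s t \<and> almost_disjoint P}"

definition separates :: "('a,'b) pre_digraph \<Rightarrow> 'a \<Rightarrow> 'a \<Rightarrow> 'b set set \<Rightarrow> bool" where
  "separates G s t \<A> \<longleftrightarrow>
     (\<forall>x\<in>\<A>. \<exists>e f. e \<in> arcs G \<and> f \<in> arcs G \<and> e \<noteq> f \<and> x = {e, f}) \<and>
     (\<forall>p\<in>st_paths G s t. \<exists>x\<in>\<A>. x \<subseteq> set p)"

definition sfp_min :: "('a,'b) pre_digraph \<Rightarrow> 'a \<Rightarrow> 'a \<Rightarrow> nat" where
  "sfp_min G s t = Min {card \<A> | \<A>. separates G s t \<A>}"

end

theory Submission
  imports Defs
begin

(* Replace each arc of a directed path with L arcs by q parallel arcs. The s-t-paths are then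
   the q^L ways of choosing one arc in every layer. Among q + 1 paths, in every layer two of them
   pick the same arc; with more than (q + 1)^2 layers one pair does so in two layers, so at most
   q paths are almost disjoint. On the other hand, a pair of arcs lies on at most a 1/q^2
   fraction of all paths, so at least q^2 pairs are needed to separate s from t. With q = N + 1
   the gap q^2 - q is at least N. *)

lemma adp_max_le:
  assumes "\<And>P. P \<subseteq> st_paths G s t \<Longrightarrow> almost_disjoint P \<Longrightarrow> card P \<le> k"
  shows "adp_max G s t \<le> k"
proof -
  let ?S = "{card P | P. P \<subseteq> st_paths G s t \<and> almost_disjoint P}"
  have bound: "\<forall>a\<in>?S. a \<le> k" by (auto intro: assms)
  then have "finite ?S" unfolding finite_nat_set_iff_bounded_le by blast
  moreover have "0 \<in> ?S"
    by (intro CollectI exI[of _ "{}"]) (simp add: almost_disjoint_def)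
  ultimately show ?thesis
    unfolding adp_max_def using bound Max_le_iff[of ?S] by blast
qed

lemma separating_set_subset_Pow_arcs:
  assumes "separates G s t \<A>"
  shows "\<A> \<subseteq> Pow (arcs G)"
proof
  fix x assume "x \<in> \<A>"
  then obtain e f where "e \<in> arcs G" "f \<in> arcs G" "x = {e, f}"
    using assms unfolding separates_def by meson
  then show "x \<in> Pow (arcs G)" by simp
qed

lemma sfp_min_ge:
  assumes "finite (arcs G)" and "separates G s t \<A>\<^sub>0"
    and "\<And>\<A>. separates G s t \<A> \<Longrightarrow> k \<le> card \<A>"
  shows "k \<le> sfp_min G s t"
proof -
  let ?S = "{card \<A> | \<A>. separates G s t \<A>}"
  have "?S \<subseteq> {..card (Pow (arcs G))}"
    using assms(1) by (auto intro!: card_mono dest!: separating_set_subset_Pow_arcs)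
  then have "finite ?S" by (rule finite_subset) simp
  moreover have "?S \<noteq> {}" using assms(2) by blast
  moreover have "\<forall>a\<in>?S. k \<le> a" by (auto intro: assms(3))
  ultimately show ?thesis
    unfolding sfp_min_def using Min_ge_iff[of ?S] by blast
qed

definition parallel_chain :: "nat \<Rightarrow> nat \<Rightarrow> (nat, nat) pre_digraph" where
  "parallel_chain q L =
     \<lparr>verts = {0..L}, arcs = {0..<L * q}, tail = (\<lambda>a. a div q), head = (\<lambda>a. a div q + 1)\<rparr>"

definition layer_lists :: "nat \<Rightarrow> nat \<Rightarrow> nat list set" where
  "layer_lists q L = {p. length p = L \<and> (\<forall>i<L. p ! i div q = i)}"

lemma fin_digraph_parallel_chain: "fin_digraph (parallel_chain q L)"
proof
  fix e assume "e \<in> arcs (parallel_chain q L)"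
  then have "e div q < L"
    by (cases "q = 0") (auto simp: parallel_chain_def div_less_iff_less_mult)
  then show "tail (parallel_chain q L) e \<in> verts (parallel_chain q L)"
    and "head (parallel_chain q L) e \<in> verts (parallel_chain q L)"
    by (auto simp: parallel_chain_def)
qed (simp_all add: parallel_chain_def)

lemma cas_parallel_chain_iff:
  "pre_digraph.cas (parallel_chain q L) u p v \<longleftrightarrow>
     v = u + length p \<and> (\<forall>i<length p. p ! i div q = u + i)"
proof (induction p arbitrary: u)
  case Nil
  then show ?case by (auto simp: pre_digraph.cas.simps)
next
  case (Cons e es)
  then show ?case
    by (auto simp: pre_digraph.cas.simps parallel_chain_def nth_Cons split: nat.splits)
qed

lemma awalk_verts_parallel_chain:
  assumes "\<forall>i<length p. p ! i div q = u + i"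
  shows "pre_digraph.awalk_verts (parallel_chain q L) u p = [u..<u + length p + 1]"
  using assms
proof (induction p arbitrary: u)
  case Nil
  then show ?case by (simp add: pre_digraph.awalk_verts.simps)
next
  case (Cons e es)
  have "\<forall>i<length es. es ! i div q = Suc u + i" using Cons.prems by fastforce
  then show ?case
    using Cons.IH Cons.prems[rule_format, of 0]
    by (simp add: pre_digraph.awalk_verts.simps parallel_chain_def upt_conv_Cons del: upt_Suc)
qed

lemma layer_lists_arc:
  assumes "p \<in> layer_lists q L" "e \<in> set p"
  shows "e div q < L" and "p ! (e div q) = e"
  using assms by (auto simp: layer_lists_def in_set_conv_nth)

lemma layer_lists_subset_arcs:
  assumes "0 < q" "p \<in> layer_lists q L"
  shows "set p \<subseteq> arcs (parallel_chain q L)"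
  using assms layer_lists_arc(1)[OF assms(2)]
  by (auto simp: parallel_chain_def div_less_iff_less_mult)

lemma st_paths_parallel_chain:
  assumes "0 < q"
  shows "st_paths (parallel_chain q L) 0 L = layer_lists q L"
proof (intro set_eqI iffI)
  fix p assume "p \<in> st_paths (parallel_chain q L) 0 L"
  then show "p \<in> layer_lists q L"
    by (auto simp: st_paths_def pre_digraph.apath_def pre_digraph.awalk_def
        cas_parallel_chain_iff layer_lists_def)
next
  fix p assume p: "p \<in> layer_lists q L"
  then have layers: "\<forall>i<length p. p ! i div q = 0 + i" and "length p = L"
    by (auto simp: layer_lists_def)
  then have "pre_digraph.cas (parallel_chain q L) 0 p L"
    by (simp add: cas_parallel_chain_iff)
  moreover have "distinct (pre_digraph.awalk_verts (parallel_chain q L) 0 p)"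
    using awalk_verts_parallel_chain[OF layers] by simp
  ultimately show "p \<in> st_paths (parallel_chain q L) 0 L"
    using layer_lists_subset_arcs[OF assms p]
    by (simp add: st_paths_def pre_digraph.apath_def pre_digraph.awalk_def parallel_chain_def)
qed

lemma finite_layer_lists:
  assumes "0 < q"
  shows "finite (layer_lists q L)"
proof -
  have "layer_lists q L \<subseteq> {p. set p \<subseteq> arcs (parallel_chain q L) \<and> length p = L}"
    using layer_lists_subset_arcs[OF assms] by (auto simp: layer_lists_def)
  then show ?thesis
    by (rule finite_subset) (auto intro: finite_lists_length_eq simp: parallel_chain_def)
qed

lemma card_layer_lists_pos:
  assumes "0 < q"
  shows "0 < card (layer_lists q L)"
proof -
  have "map (\<lambda>i. i * q) [0..<L] \<in> layer_lists q L"
    using assms by (auto simp: layer_lists_def)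
  then show ?thesis using finite_layer_lists[OF assms] card_gt_0_iff by blast
qed

lemma separates_parallel_chain_first_layers:
  assumes "0 < q" "2 \<le> L"
  shows "separates (parallel_chain q L) 0 L {{a, b} | a b. a < q \<and> q \<le> b \<and> b < 2 * q}"
  unfolding separates_def
proof (intro conjI ballI)
  fix x assume "x \<in> {{a, b} | a b. a < q \<and> q \<le> b \<and> b < 2 * q}"
  then obtain a b where ab: "x = {a, b}" "a < q" "q \<le> b" "b < 2 * q" by blast
  moreover have "b < L * q"
    using ab(4) assms(2) by (meson less_le_trans mult_le_mono1)
  ultimately show "\<exists>e f. e \<in> arcs (parallel_chain q L) \<and> f \<in> arcs (parallel_chain q L) \<and>
      e \<noteq> f \<and> x = {e, f}"
    by (intro exI[of _ a] exI[of _ b]) (auto simp: parallel_chain_def)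
next
  fix p assume "p \<in> st_paths (parallel_chain q L) 0 L"
  then have "p \<in> layer_lists q L" using st_paths_parallel_chain[OF assms(1)] by simp
  then have "p ! 0 div q = 0" "p ! 1 div q = 1" "length p = L"
    using assms(2) by (auto simp: layer_lists_def)
  then have "p ! 0 < q" "q \<le> p ! 1" "p ! 1 < 2 * q" "{p ! 0, p ! 1} \<subseteq> set p"
    using assms less_eq_div_iff_mult_less_eq[of q 1 "p ! 1"] div_less_iff_less_mult[of q "p ! 1" 2]
    by (auto simp: div_eq_0_iff)
  then show "\<exists>x\<in>{{a, b} | a b. a < q \<and> q \<le> b \<and> b < 2 * q}. x \<subseteq> set p" by blast
qed

lemma layer_lists_share_arc:
  assumes "0 < q" "Q \<subseteq> layer_lists q L" "q < card Q" "i < L"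
  obtains p p' where "p \<in> Q" "p' \<in> Q" "p \<noteq> p'" "p ! i = p' ! i"
proof -
  have "\<not> inj_on (\<lambda>p. p ! i mod q) Q"
  proof
    assume "inj_on (\<lambda>p. p ! i mod q) Q"
    then have "card Q \<le> card {0..<q}"
      by (rule card_inj_on_le) (use assms(1) in auto)
    with assms(3) show False by simp
  qed
  then obtain p p' where pp: "p \<in> Q" "p' \<in> Q" "p \<noteq> p'" "p ! i mod q = p' ! i mod q"
    by (auto simp: inj_on_def)
  have "p \<in> layer_lists q L" "p' \<in> layer_lists q L" using pp(1,2) assms(2) by auto
  with assms(4) have "p ! i div q = p' ! i div q" by (simp add: layer_lists_def)
  with pp show thesis
    by (metis that div_mult_mod_eq)
qed

lemma almost_disjoint_layer_lists_agree_once: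
  assumes "almost_disjoint P" "P \<subseteq> layer_lists q L" "p \<in> P" "p' \<in> P" "p \<noteq> p'"
    and "i < L" "j < L" "p ! i = p' ! i" "p ! j = p' ! j"
  shows "i = j"
proof (rule ccontr)
  assume "i \<noteq> j"
  have "p \<in> layer_lists q L" "p' \<in> layer_lists q L" using assms(2-4) by auto
  then have len: "length p = L" "length p' = L" and "p ! i div q = i" "p ! j div q = j"
    using assms(6,7) by (auto simp: layer_lists_def)
  then have "p ! i \<noteq> p ! j" using \<open>i \<noteq> j\<close> by metis
  moreover have "{p ! i, p ! j} \<subseteq> set p \<inter> set p'"
    using assms(6-9) len by (metis Int_iff empty_subsetI insert_subset nth_mem)
  ultimately have "2 \<le> card (set p \<inter> set p')"
    by (metis List.finite_set card_2_iff card_mono finite_Int)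
  with assms(1,3-5) show False unfolding almost_disjoint_def by fastforce
qed

lemma card_almost_disjoint_layer_lists_le:
  assumes "0 < q" "(q + 1) * (q + 1) < L" "P \<subseteq> layer_lists q L" "almost_disjoint P"
  shows "card P \<le> q"
proof (rule ccontr)
  assume "\<not> card P \<le> q"
  then obtain Q where Q: "Q \<subseteq> P" "card Q = q + 1"
    by (metis Suc_eq_plus1 not_less_eq_eq obtain_subset_with_card_n)
  then have "finite Q" by (simp add: card_ge_0_finite)
  have "\<forall>i\<in>{0..<L}. \<exists>pp\<in>Q \<times> Q. fst pp \<noteq> snd pp \<and> fst pp ! i = snd pp ! i"
  proof
    fix i assume "i \<in> {0..<L}"
    moreover have "Q \<subseteq> layer_lists q L" "q < card Q" using Q assms(3) by auto
    ultimately obtain p p' where "p \<in> Q" "p' \<in> Q" "p \<noteq> p'" "p ! i = p' ! i"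
      using layer_lists_share_arc[OF assms(1)] by (metis atLeastLessThan_iff)
    then show "\<exists>pp\<in>Q \<times> Q. fst pp \<noteq> snd pp \<and> fst pp ! i = snd pp ! i" by force
  qed
  then obtain g where g: "\<forall>i\<in>{0..<L}.
      g i \<in> Q \<times> Q \<and> fst (g i) \<noteq> snd (g i) \<and> fst (g i) ! i = snd (g i) ! i"
    by metis
  have "\<not> inj_on g {0..<L}"
  proof
    assume "inj_on g {0..<L}"
    then have "card {0..<L} \<le> card (Q \<times> Q)"
      using g \<open>finite Q\<close> by (intro card_inj_on_le) auto
    with Q assms(2) show False by (simp add: card_cartesian_product)
  qed
  then obtain i j where ij: "i < L" "j < L" "i \<noteq> j" "g i = g j"
    by (auto simp: inj_on_def)
  obtain p p' where "g i = (p, p')" by fastforce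
  with g ij Q(1) have "p \<in> P" "p' \<in> P" "p \<noteq> p'" "p ! i = p' ! i" "p ! j = p' ! j"
    by (metis atLeastLessThan_iff fst_conv snd_conv mem_Times_iff subsetD zero_le)+
  with ij almost_disjoint_layer_lists_agree_once[OF assms(4,3)] show False by blast
qed

lemma card_layer_lists_through_pair:
  assumes "0 < q" "e \<noteq> f"
  shows "q * q * card {p \<in> layer_lists q L. {e, f} \<subseteq> set p} \<le> card (layer_lists q L)"
proof (cases "e div q = f div q")
  case True
  have False if "p \<in> layer_lists q L" "e \<in> set p" "f \<in> set p" for p
    using layer_lists_arc(2)[OF that(1,2)] layer_lists_arc(2)[OF that(1,3)] True assms(2) by simp
  then have "{p \<in> layer_lists q L. {e, f} \<subseteq> set p} = {}" by blast
  then show ?thesis by (metis card.empty le0 mult_0_right)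
next
  case False
  define i j where "i = e div q" and "j = f div q"
  define C where "C = {p \<in> layer_lists q L. {e, f} \<subseteq> set p}"
  have C: "p \<in> layer_lists q L" "p ! i = e" "p ! j = f" "i < L" "j < L" if "p \<in> C" for p
    using that layer_lists_arc[of p q L] by (auto simp: C_def i_def j_def)
  have "i \<noteq> j" using False by (simp add: i_def j_def)
  (* Rerouting a path of C through an arbitrary arc of layer i and of layer j is injective. *)
  define F where "F = (\<lambda>(c, d, p). (p :: nat list)[i := i * q + c, j := j * q + d])"
  have F_nth: "F (c, d, p) ! i = i * q + c" "F (c, d, p) ! j = j * q + d" if "p \<in> C" for c d p
    using C[OF that] \<open>i \<noteq> j\<close> by (auto simp: F_def nth_list_update layer_lists_def)
  have F_undo: "(F (c, d, p))[i := e, j := f] = p" if "p \<in> C" for c d p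
    using C[OF that] \<open>i \<noteq> j\<close> list_update_id[of p i] list_update_id[of p j]
    by (simp add: F_def list_update_swap)
  have "inj_on F ({0..<q} \<times> {0..<q} \<times> C)"
  proof (rule inj_onI)
    fix x y assume "x \<in> {0..<q} \<times> {0..<q} \<times> C" "y \<in> {0..<q} \<times> {0..<q} \<times> C" "F x = F y"
    then obtain c d p c' d' p' where "x = (c, d, p)" "y = (c', d', p')" "p \<in> C" "p' \<in> C"
      and "F (c, d, p) = F (c', d', p')" by auto
    then show "x = y" using F_nth F_undo by (metis add_left_cancel)
  qed
  moreover have "F ` ({0..<q} \<times> {0..<q} \<times> C) \<subseteq> layer_lists q L"
  proof (rule image_subsetI)
    fix x assume "x \<in> {0..<q} \<times> {0..<q} \<times> C"
    then obtain c d p where "x = (c, d, p)" "c < q" "d < q" "p \<in> C" by auto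
    with C show "F x \<in> layer_lists q L"
      by (auto simp: F_def nth_list_update layer_lists_def)
  qed
  ultimately have "card ({0..<q} \<times> {0..<q} \<times> C) \<le> card (layer_lists q L)"
    using finite_layer_lists[OF assms(1)] by (rule card_inj_on_le)
  then show ?thesis by (simp add: card_cartesian_product C_def)
qed

lemma card_separating_parallel_chain_ge:
  assumes "0 < q" "separates (parallel_chain q L) 0 L \<A>"
  shows "q * q \<le> card \<A>"
proof -
  let ?P = "layer_lists q L"
  define through where "through x = {p \<in> ?P. x \<subseteq> set p}" for x
  have "finite \<A>"
    using separating_set_subset_Pow_arcs[OF assms(2)]
    by (rule finite_subset) (simp add: parallel_chain_def)
  have "?P = (\<Union>x\<in>\<A>. through x)"
    using assms(2) st_paths_parallel_chain[OF assms(1)] by (auto simp: separates_def through_def)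
  then have "q * q * card ?P \<le> q * q * (\<Sum>x\<in>\<A>. card (through x))"
    using card_UN_le[OF \<open>finite \<A>\<close>, of through] by simp
  also have "\<dots> = (\<Sum>x\<in>\<A>. q * q * card (through x))"
    by (simp add: sum_distrib_left)
  also have "\<dots> \<le> (\<Sum>x\<in>\<A>. card ?P)"
  proof (rule sum_mono)
    fix x assume "x \<in> \<A>"
    then obtain e f where "e \<noteq> f" "x = {e, f}"
      using assms(2) unfolding separates_def by meson
    then show "q * q * card (through x) \<le> card ?P"
      using card_layer_lists_through_pair[OF assms(1)] by (simp add: through_def)
  qed
  also have "\<dots> = card \<A> * card ?P" by simp
  finally show ?thesis using card_layer_lists_pos[OF assms(1)] by simp
qed

theorem lemma1:
  fixes N :: nat
  shows "\<exists>(G :: (nat, nat) pre_digraph) s t.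
           fin_digraph G \<and> s \<in> verts G \<and> t \<in> verts G \<and> s \<noteq> t \<and>
           (\<exists>\<A>. separates G s t \<A>) \<and>
           sfp_min G s t \<ge> adp_max G s t + N"
proof -
  define q where "q = N + 1"
  define L where "L = (q + 1) * (q + 1) + 1"
  let ?G = "parallel_chain q L"
  have q: "0 < q" and L: "2 \<le> L" "(q + 1) * (q + 1) < L" by (simp_all add: q_def L_def)
  note sep = separates_parallel_chain_first_layers[OF q L(1)]
  have "adp_max ?G 0 L \<le> q"
    using card_almost_disjoint_layer_lists_le[OF q L(2)]
    by (intro adp_max_le) (simp add: st_paths_parallel_chain[OF q])
  moreover have "q * q \<le> sfp_min ?G 0 L"
    using card_separating_parallel_chain_ge[OF q]
    by (intro sfp_min_ge[OF _ sep]) (simp_all add: parallel_chain_def)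
  moreover have "q + N \<le> q * q" by (simp add: q_def)
  ultimately have "sfp_min ?G 0 L \<ge> adp_max ?G 0 L + N" by linarith
  moreover have "0 \<in> verts ?G" "L \<in> verts ?G" "0 \<noteq> L" using L by (auto simp: parallel_chain_def)
  ultimately show ?thesis using fin_digraph_parallel_chain sep by blast
qed

end
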